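(* Let $X_1,X_2,\dots:\Omega\to(0,1)$ be random variables such that for every Borel set $B\subset(0,1)$ of positive Lebesgue measure, $B\cap\{X_1,X_2,\dots\}\ne\emptyset$ a.s. Then the random countable set $\{X_1,X_2,\dots\}$ has a selector whose distribution is uniform on $(0,1)$. That is, there is a probability measure $P$ on $(0,1)^\infty\times(0,1)$ such that: - its first marginal is the joint law of $(X_1,X_2,\dots)$; - its second marginal is the uniform distribution on $(0,1)$; - $z\in\{x_1,x_2,\dots\}$ for $P$-almost all $((x_1,x_2,\dots),z)$.
   Context: A selector of the random countable set $\{X_1,X_2,\dots\}$ is a probability measure $P$ on $(0,1)^\infty\times(0,1)$ whose first marginal is the joint law of $(X_1,X_2,\dots)$ and such that $z\in\{x_1,x_2,\dots\}$ for $P$-almost all $(x,z)$. Its distribution is its second marginal. *)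

theory Defs
  imports "HOL-Probability.Probability"
begin

definition unit_ival :: "real measure" where
  "unit_ival = restrict_space lborel {0<..<1}"

definition seq_space :: "(nat \<Rightarrow> real) measure" where
  "seq_space = PiM UNIV (\<lambda>_. unit_ival)"

end

theory Submission
  imports Defs
begin

(* Let the mixture be the sum of the laws of the X i with weights 2^-(i+1). The hitting hypothesis
   makes the target law absolutely continuous with respect to it, and so is the law of X i under any
   sub-probability weight on the sample space; all densities are taken with respect to the mixture.
   The selector is built greedily. Before stage i each outcome \<omega> still carries the unused mass
   rest_mass i \<omega> (initially 1), and the target still misses the density rest_density i (initially the
   whole target density). Weighted by rest_mass i, X i offers the density offered_density i, and each
   \<omega> hands over the fraction of its mass that makes X i fill exactly the part of the offer that is
   still missing, min (offered_density i) (rest_density i).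
   Call deficit the set where the accepted densities never add up to the target density. A visit of
   X i at a point z of it means that the visiting \<omega> gave away all its mass (otherwise z would have
   been filled), so the deficit is hit only by outcomes of total weight 1. If its target measure is 0,
   the deficit is null because the target density is positive on it. Otherwise almost every outcome
   hits it and has total weight 1, and comparing total masses shows that the accepted densities add
   up to the target density almost everywhere, so the deficit is null after all. Hence almost every
   \<omega> distributes its whole mass, and choosing X i \<omega> with probability weight i \<omega> defines a selector
   with the target law. *)

lemma space_unit_ival [simp]: "space unit_ival = {0<..<1}"
  unfolding unit_ival_def by (simp add: space_restrict_space)

lemma sets_unit_ival_iff: "A \<in> sets unit_ival \<longleftrightarrow> A \<subseteq> {0<..<1} \<and> A \<in> sets borel"
  unfolding unit_ival_def by (subst sets_restrict_space_iff) auto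

lemma emeasure_unit_ival: "A \<in> sets unit_ival \<Longrightarrow> emeasure unit_ival A = emeasure lborel A"
  using sets_unit_ival_iff[of A] unfolding unit_ival_def by (intro emeasure_restrict_space) auto

lemma prob_space_unit_ival: "prob_space unit_ival"
  by standard (simp add: emeasure_unit_ival sets_unit_ival_iff)

lemma measurable_unit_ival_imp_borel: "f \<in> measurable N unit_ival \<Longrightarrow> f \<in> borel_measurable N"
  unfolding unit_ival_def measurable_restrict_space2_iff
  using measurable_cong_sets[OF refl sets_lborel] by blast

lemma sets_selector_event:
  "{p \<in> space (seq_space \<Otimes>\<^sub>M unit_ival). snd p \<in> range (fst p)} \<in> sets (seq_space \<Otimes>\<^sub>M unit_ival)"
proof -
  have [measurable]: "(\<lambda>p. fst p j) \<in> borel_measurable (seq_space \<Otimes>\<^sub>M unit_ival)" for j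
    by (rule measurable_unit_ival_imp_borel) (unfold seq_space_def, measurable)
  have [measurable]: "snd \<in> borel_measurable (seq_space \<Otimes>\<^sub>M unit_ival)"
    by (rule measurable_unit_ival_imp_borel) measurable
  have "{p \<in> space (seq_space \<Otimes>\<^sub>M unit_ival). snd p \<in> range (fst p)}
      = (\<Union>j. {p \<in> space (seq_space \<Otimes>\<^sub>M unit_ival). snd p = fst p j})"
    by auto
  also have "\<dots> \<in> sets (seq_space \<Otimes>\<^sub>M unit_ival)"
    by measurable
  finally show ?thesis .
qed

lemma ennreal_le_suminf: "f i \<le> (\<Sum>j. f j :: ennreal)"
  using sum_le_suminf[of f "{i}"] by simp

lemma emeasure_distr_density_count_space_pair:
  fixes W :: "nat \<Rightarrow> 'a \<Rightarrow> ennreal"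
  assumes "sigma_finite_measure M" and [measurable]: "\<And>i. W i \<in> borel_measurable M"
    and f: "f \<in> measurable (count_space UNIV \<Otimes>\<^sub>M M) N" and E: "E \<in> sets N"
  shows "emeasure (distr (density (count_space UNIV \<Otimes>\<^sub>M M) (\<lambda>(i, x). W i x)) N f) E
       = (\<integral>\<^sup>+x. (\<Sum>i. W i x * indicator E (f (i, x))) \<partial>M)"
proof -
  interpret pair_sigma_finite "count_space UNIV :: nat measure" M
    by (simp add: pair_sigma_finite_def assms(1) sigma_finite_measure_count_space)
  have W: "(\<lambda>(i, x). W i x) \<in> borel_measurable (count_space UNIV \<Otimes>\<^sub>M M)"
    by (simp add: split_beta')
  have "emeasure (distr (density (count_space UNIV \<Otimes>\<^sub>M M) (\<lambda>(i, x). W i x)) N f) E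
      = (\<integral>\<^sup>+p. W (fst p) (snd p) * indicator E (f p) \<partial>(count_space UNIV \<Otimes>\<^sub>M M))"
    using f E W
    by (simp add: emeasure_distr emeasure_density split_beta' indicator_def
                  measurable_sets[OF f E] cong: nn_integral_cong_simp)
  also have "\<dots> = (\<integral>\<^sup>+x. (\<integral>\<^sup>+i. W i x * indicator E (f (i, x)) \<partial>count_space UNIV) \<partial>M)"
    using f E W by (subst nn_integral_snd[symmetric]) (auto simp: split_beta')
  also have "\<dots> = (\<integral>\<^sup>+x. (\<Sum>i. W i x * indicator E (f (i, x))) \<partial>M)"
    by (simp add: nn_integral_count_space_nat)
  finally show ?thesis .
qed

lemma density_enn2real_RN_deriv:
  assumes "sigma_finite_measure M" "finite_measure N"
    and "absolutely_continuous M N" "sets N = sets M"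
  shows "density M (\<lambda>x. ennreal (enn2real (RN_deriv M N x))) = N"
proof -
  interpret sigma_finite_measure M by fact
  have "AE x in M. RN_deriv M N x \<noteq> \<infinity>"
    using assms by (intro RN_deriv_finite) (auto simp: finite_measure.sigma_finite_measure)
  then have "density M (\<lambda>x. ennreal (enn2real (RN_deriv M N x))) = density M (RN_deriv M N)"
    by (intro density_cong) (auto simp: ennreal_enn2real_if)
  also have "\<dots> = N"
    using assms by (intro density_RN_deriv) auto
  finally show ?thesis .
qed

lemma AE_eq_if_nn_integral_eq:
  fixes f g :: "'a \<Rightarrow> ennreal"
  assumes [measurable]: "f \<in> borel_measurable M" "g \<in> borel_measurable M"
    and "(\<integral>\<^sup>+x. f x \<partial>M) = (\<integral>\<^sup>+x. g x \<partial>M)" "(\<integral>\<^sup>+x. f x \<partial>M) \<noteq> \<infinity>"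
    and le: "AE x in M. f x \<le> g x"
  shows "AE x in M. f x = g x"
proof -
  have "AE x in M. g x \<le> f x"
    using nn_integral_less[of f M g] assms by (metis less_irrefl)
  with le show ?thesis
    by eventually_elim auto
qed

(* At k = 0 the ratio is 1 rather than 0 / 0 = 0: an outcome whose X i lands where nothing is
   offered then gives away all its remaining mass, which the exhaustion argument relies on. *)
definition fill_ratio :: "real \<Rightarrow> real \<Rightarrow> real" where
  "fill_ratio k r = (if k \<le> r then 1 else r / k)"

lemma fill_ratio_nonneg: "0 \<le> r \<Longrightarrow> 0 \<le> fill_ratio k r"
  by (simp add: fill_ratio_def)

lemma fill_ratio_le_1: "0 \<le> r \<Longrightarrow> fill_ratio k r \<le> 1"
  by (simp add: fill_ratio_def)

lemma mult_fill_ratio: "0 \<le> r \<Longrightarrow> k * fill_ratio k r = min k r"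
  by (simp add: fill_ratio_def)

lemma
  fixes a b :: "nat \<Rightarrow> real"
  assumes "\<And>i. 0 \<le> a i" "\<And>n. 0 \<le> b n" and partial_sums: "\<And>n. (\<Sum>i<n. a i) = c - b n"
  shows suminf_ennreal_le_if_remainders: "(\<Sum>i. ennreal (a i)) \<le> ennreal c"
    and suminf_ennreal_eq_if_remainder_0: "b n = 0 \<Longrightarrow> (\<Sum>i. ennreal (a i)) = ennreal c"
proof -
  have partial_sums': "(\<Sum>i<n. ennreal (a i)) = ennreal (c - b n)" for n
    using assms by (simp add: partial_sums[symmetric])
  show le: "(\<Sum>i. ennreal (a i)) \<le> ennreal c"
    unfolding suminf_eq_SUP partial_sums' using assms(2) by (intro SUP_least ennreal_leI) simp
  assume "b n = 0"
  then have "ennreal c \<le> (\<Sum>i. ennreal (a i))"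
    using sum_le_suminf[of "\<lambda>i. ennreal (a i)" "{..<n}"] partial_sums'[of n] by simp
  with le show "(\<Sum>i. ennreal (a i)) = ennreal c"
    by (rule antisym)
qed

section \<open>Densities with respect to the mixture of the laws\<close>

locale hitting_sequence = prob_space M + target: prob_space \<nu>
  for M :: "'a measure" and \<nu> :: "real measure" +
  fixes X :: "nat \<Rightarrow> 'a \<Rightarrow> real"
  assumes measurable_X: "\<And>i. X i \<in> measurable M unit_ival"
    and sets_target: "sets \<nu> = sets unit_ival"
    and hits: "\<And>B. B \<in> sets \<nu> \<Longrightarrow> emeasure \<nu> B \<noteq> 0 \<Longrightarrow> AE \<omega> in M. \<exists>i. X i \<omega> \<in> B"
begin

lemma X_in_unit_ival: "\<omega> \<in> space M \<Longrightarrow> X i \<omega> \<in> {0<..<1}"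
  using measurable_space[OF measurable_X] by simp

lemma measurable_X_pair: "(\<lambda>(i, \<omega>). X i \<omega>) \<in> measurable (count_space UNIV \<Otimes>\<^sub>M M) unit_ival"
  unfolding split_beta' by (rule measurable_pair_measure_countable1) (auto simp: measurable_X)

lemma measurable_comp_X: "h \<in> borel_measurable unit_ival \<Longrightarrow> (\<lambda>\<omega>. h (X i \<omega>)) \<in> borel_measurable M"
  using measurable_X by (rule measurable_compose)

definition mixture :: "real measure" where
  "mixture = distr (density (count_space UNIV \<Otimes>\<^sub>M M) (\<lambda>(i, \<omega>). ennreal ((1/2) ^ Suc i)))
     unit_ival (\<lambda>(i, \<omega>). X i \<omega>)"

lemma sets_mixture [simp, measurable_cong]: "sets mixture = sets unit_ival"
  by (simp add: mixture_def)

lemma space_mixture [simp]: "space mixture = {0<..<1}"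
  by (simp add: mixture_def)

lemma emeasure_mixture:
  "C \<in> sets unit_ival \<Longrightarrow>
     emeasure mixture C = (\<integral>\<^sup>+\<omega>. (\<Sum>i. ennreal ((1/2) ^ Suc i) * indicator C (X i \<omega>)) \<partial>M)"
  unfolding mixture_def
  by (subst emeasure_distr_density_count_space_pair) (auto simp: measurable_X_pair sigma_finite_measure_axioms)

lemma prob_space_mixture: "prob_space mixture"
proof
  have "emeasure mixture {0<..<1}
      = (\<integral>\<^sup>+\<omega>. (\<Sum>i. ennreal ((1/2) ^ Suc i) * indicator {0<..<1} (X i \<omega>)) \<partial>M)"
    by (rule emeasure_mixture) (simp add: sets_unit_ival_iff)
  also have "\<dots> = (\<integral>\<^sup>+\<omega>. (\<Sum>i. ennreal ((1/2) ^ Suc i)) \<partial>M)"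
    by (intro nn_integral_cong) (simp add: indicator_simps(1)[OF X_in_unit_ival])
  also have "(\<Sum>i. ennreal ((1/2::real) ^ Suc i)) = 1"
    using power_half_series by (subst suminf_ennreal2) (auto simp: sums_iff)
  finally show "emeasure mixture (space mixture) = 1"
    by (simp add: emeasure_space_1)
qed

lemma law_le_mixture:
  assumes C: "C \<in> sets unit_ival"
  shows "ennreal ((1/2) ^ Suc i) * emeasure M (X i -` C \<inter> space M) \<le> emeasure mixture C"
proof -
  have "ennreal ((1/2) ^ Suc i) * emeasure M (X i -` C \<inter> space M)
      = (\<integral>\<^sup>+\<omega>. ennreal ((1/2) ^ Suc i) * indicator C (X i \<omega>) \<partial>M)"
    using measurable_sets[OF measurable_X C]
    by (subst nn_integral_cmult_indicator[symmetric]) (auto intro!: nn_integral_cong simp: indicator_def)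
  also have "\<dots> \<le> (\<integral>\<^sup>+\<omega>. (\<Sum>j. ennreal ((1/2) ^ Suc j) * indicator C (X j \<omega>)) \<partial>M)"
    by (intro nn_integral_mono ennreal_le_suminf)
  also have "\<dots> = emeasure mixture C"
    using C by (simp add: emeasure_mixture)
  finally show ?thesis .
qed

lemma law_null_if_mixture_null:
  assumes "C \<in> null_sets mixture"
  shows "emeasure M (X i -` C \<inter> space M) = 0"
proof -
  have "C \<in> sets unit_ival" "emeasure mixture C = 0"
    using assms by auto
  then show ?thesis
    using law_le_mixture[of C i] by simp
qed

lemma absolutely_continuous_target: "absolutely_continuous mixture \<nu>"
  unfolding absolutely_continuous_def
proof
  fix C assume C: "C \<in> null_sets mixture"
  then have C_sets: "C \<in> sets unit_ival"
    by auto
  have "AE \<omega> in M. X i \<omega> \<notin> C" for i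
  proof (rule AE_I)
    show "{\<omega> \<in> space M. \<not> X i \<omega> \<notin> C} \<subseteq> X i -` C \<inter> space M"
      by auto
  qed (use law_null_if_mixture_null[OF C] measurable_sets[OF measurable_X C_sets] in auto)
  then have no_hit: "AE \<omega> in M. \<forall>i. X i \<omega> \<notin> C"
    by (simp add: AE_all_countable)
  have "emeasure \<nu> C = 0"
  proof (rule ccontr)
    assume "emeasure \<nu> C \<noteq> 0"
    then have "AE \<omega> in M. \<exists>i. X i \<omega> \<in> C"
      using hits C_sets by (simp add: sets_target)
    with no_hit have "AE \<omega> in M. False"
      by eventually_elim auto
    then show False
      by (simp add: AE_False)
  qed
  then show "C \<in> null_sets \<nu>"
    using C_sets by (simp add: null_sets_def sets_target)
qed

definition target_density :: "real \<Rightarrow> real" where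
  "target_density z = enn2real (RN_deriv mixture \<nu> z)"

lemma borel_measurable_target_density [measurable]: "target_density \<in> borel_measurable unit_ival"
  unfolding target_density_def by (simp add: measurable_cong_sets[OF sets_mixture[symmetric] refl])

lemma density_target_density: "density mixture (\<lambda>z. ennreal (target_density z)) = \<nu>"
  unfolding target_density_def using prob_space_mixture absolutely_continuous_target
  by (intro density_enn2real_RN_deriv)
     (auto simp: prob_space_imp_sigma_finite target.finite_measure_axioms sets_target)

lemma emeasure_target:
  "C \<in> sets unit_ival \<Longrightarrow> emeasure \<nu> C = (\<integral>\<^sup>+z. ennreal (target_density z) * indicator C z \<partial>mixture)"
  by (subst density_target_density[symmetric]) (simp add: emeasure_density)

lemma nn_integral_target_density: "(\<integral>\<^sup>+z. ennreal (target_density z) \<partial>mixture) = 1"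
proof -
  have "(\<integral>\<^sup>+z. ennreal (target_density z) \<partial>mixture)
      = (\<integral>\<^sup>+z. ennreal (target_density z) * indicator {0<..<1} z \<partial>mixture)"
    by (intro nn_integral_cong) simp
  also have "\<dots> = emeasure \<nu> (space \<nu>)"
    using sets.top[of unit_ival] sets_eq_imp_space_eq[OF sets_target]
    by (simp add: emeasure_target)
  finally show ?thesis
    by (simp add: target.emeasure_space_1)
qed

definition weighted_law :: "('a \<Rightarrow> real) \<Rightarrow> nat \<Rightarrow> real measure" where
  "weighted_law L i = distr (density M (\<lambda>\<omega>. ennreal (L \<omega>))) unit_ival (X i)"

lemma sets_weighted_law [simp]: "sets (weighted_law L i) = sets unit_ival"
  by (simp add: weighted_law_def)

lemma emeasure_weighted_law_le:
  assumes [measurable]: "L \<in> borel_measurable M" and "\<And>\<omega>. L \<omega> \<le> 1" and C: "C \<in> sets unit_ival"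
  shows "emeasure (weighted_law L i) C \<le> emeasure M (X i -` C \<inter> space M)"
proof -
  have C_M [measurable]: "X i -` C \<inter> space M \<in> sets M"
    using measurable_X C by (rule measurable_sets)
  have "emeasure (weighted_law L i) C = (\<integral>\<^sup>+\<omega>. ennreal (L \<omega>) * indicator (X i -` C \<inter> space M) \<omega> \<partial>M)"
    unfolding weighted_law_def using C measurable_X[of i]
    by (simp add: emeasure_distr emeasure_density)
  also have "\<dots> \<le> (\<integral>\<^sup>+\<omega>. indicator (X i -` C \<inter> space M) \<omega> \<partial>M)"
    using assms(2) by (intro nn_integral_mono) (simp add: indicator_def)
  finally show ?thesis
    by simp
qed

definition law_density :: "('a \<Rightarrow> real) \<Rightarrow> nat \<Rightarrow> real \<Rightarrow> real" where
  "law_density L i z = enn2real (RN_deriv mixture (weighted_law L i) z)"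

lemma borel_measurable_law_density [measurable]: "law_density L i \<in> borel_measurable unit_ival"
  unfolding law_density_def[abs_def] by (simp add: measurable_cong_sets[OF sets_mixture[symmetric] refl])

lemma law_density_nonneg: "0 \<le> law_density L i z"
  by (simp add: law_density_def)

lemma density_law_density:
  assumes "L \<in> borel_measurable M" and "\<And>\<omega>. L \<omega> \<le> 1"
  shows "density mixture (\<lambda>z. ennreal (law_density L i z)) = weighted_law L i"
  unfolding law_density_def
proof (rule density_enn2real_RN_deriv)
  show "sigma_finite_measure mixture"
    using prob_space_mixture by (rule prob_space_imp_sigma_finite)
  show "finite_measure (weighted_law L i)"
  proof
    have "emeasure (weighted_law L i) {0<..<1} \<le> emeasure M (X i -` {0<..<1} \<inter> space M)"
      using assms by (intro emeasure_weighted_law_le) (auto simp: sets_unit_ival_iff)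
    also have "\<dots> \<le> 1"
      by (rule emeasure_le_1)
    finally show "emeasure (weighted_law L i) (space (weighted_law L i)) \<noteq> \<infinity>"
      by (auto simp: weighted_law_def top_unique)
  qed
  show "absolutely_continuous mixture (weighted_law L i)"
    unfolding absolutely_continuous_def
  proof
    fix C assume C: "C \<in> null_sets mixture"
    then have "C \<in> sets unit_ival"
      by auto
    then show "C \<in> null_sets (weighted_law L i)"
      using emeasure_weighted_law_le[OF assms, of C i] law_null_if_mixture_null[OF C, of i] by auto
  qed
qed simp

lemma nn_integral_weighted_comp:
  assumes [measurable]: "L \<in> borel_measurable M" and "\<And>\<omega>. L \<omega> \<le> 1"
    and [measurable]: "h \<in> borel_measurable unit_ival"
  shows "(\<integral>\<^sup>+\<omega>. ennreal (L \<omega>) * h (X i \<omega>) \<partial>M) = (\<integral>\<^sup>+z. ennreal (law_density L i z) * h z \<partial>mixture)"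
proof -
  have "(\<integral>\<^sup>+\<omega>. ennreal (L \<omega>) * h (X i \<omega>) \<partial>M) = (\<integral>\<^sup>+z. h z \<partial>weighted_law L i)"
    unfolding weighted_law_def using measurable_X[of i] measurable_comp_X[of h i]
    by (simp add: nn_integral_distr nn_integral_density)
  also have "\<dots> = (\<integral>\<^sup>+z. ennreal (law_density L i z) * h z \<partial>mixture)"
    by (simp add: density_law_density[OF assms(1,2), symmetric] nn_integral_density)
  finally show ?thesis .
qed

section \<open>Greedy transport of mass\<close>

fun rest_mass :: "nat \<Rightarrow> 'a \<Rightarrow> real" and rest_density :: "nat \<Rightarrow> real \<Rightarrow> real" where
  "rest_mass 0 \<omega> = 1"
| "rest_mass (Suc i) \<omega> = rest_mass i \<omega> *
     (1 - fill_ratio (law_density (rest_mass i) i (X i \<omega>)) (rest_density i (X i \<omega>)))"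
| "rest_density 0 z = target_density z"
| "rest_density (Suc i) z = rest_density i z - min (law_density (rest_mass i) i z) (rest_density i z)"

definition offered_density :: "nat \<Rightarrow> real \<Rightarrow> real" where
  "offered_density i = law_density (rest_mass i) i"

definition accepted_density :: "nat \<Rightarrow> real \<Rightarrow> real" where
  "accepted_density i z = min (offered_density i z) (rest_density i z)"

definition weight :: "nat \<Rightarrow> 'a \<Rightarrow> real" where
  "weight i \<omega> = rest_mass i \<omega> * fill_ratio (offered_density i (X i \<omega>)) (rest_density i (X i \<omega>))"

lemma rest_mass_Suc_eq: "rest_mass (Suc i) \<omega> = rest_mass i \<omega> - weight i \<omega>"
  by (simp add: weight_def offered_density_def algebra_simps)

lemma rest_density_Suc_eq: "rest_density (Suc i) z = rest_density i z - accepted_density i z"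
  by (simp add: accepted_density_def offered_density_def)

lemma offered_density_nonneg: "0 \<le> offered_density i z"
  by (simp add: offered_density_def law_density_nonneg)

lemma rest_density_nonneg: "0 \<le> rest_density i z"
  by (induction i) (auto simp: target_density_def)

lemma accepted_density_nonneg: "0 \<le> accepted_density i z"
  by (simp add: accepted_density_def offered_density_nonneg rest_density_nonneg)

lemma rest_mass_bounds: "0 \<le> rest_mass i \<omega> \<and> rest_mass i \<omega> \<le> 1"
proof (induction i)
  case (Suc i)
  let ?f = "fill_ratio (law_density (rest_mass i) i (X i \<omega>)) (rest_density i (X i \<omega>))"
  have "0 \<le> ?f" "?f \<le> 1"
    using fill_ratio_nonneg fill_ratio_le_1 rest_density_nonneg by auto
  with Suc show ?case
    by (auto intro: mult_le_one)
qed simp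

lemma rest_mass_nonneg: "0 \<le> rest_mass i \<omega>"
  and rest_mass_le_1: "rest_mass i \<omega> \<le> 1"
  using rest_mass_bounds by auto

lemma weight_nonneg: "0 \<le> weight i \<omega>"
  by (simp add: weight_def rest_mass_nonneg fill_ratio_nonneg rest_density_nonneg)

lemma borel_measurable_rest_mass_rest_density:
  "rest_mass i \<in> borel_measurable M \<and> rest_density i \<in> borel_measurable unit_ival"
proof (induction i)
  case 0
  have "rest_mass 0 = (\<lambda>_. 1)" "rest_density 0 = target_density"
    by auto
  then show ?case
    by simp
next
  case (Suc i)
  then have [measurable]: "rest_mass i \<in> borel_measurable M" "rest_density i \<in> borel_measurable unit_ival"
    by auto
  have "(\<lambda>z. fill_ratio (law_density (rest_mass i) i z) (rest_density i z)) \<in> borel_measurable unit_ival"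
    unfolding fill_ratio_def by measurable
  from measurable_comp_X[OF this, of i] have [measurable]:
    "(\<lambda>\<omega>. fill_ratio (law_density (rest_mass i) i (X i \<omega>)) (rest_density i (X i \<omega>))) \<in> borel_measurable M" .
  have "rest_mass (Suc i) = (\<lambda>\<omega>. rest_mass i \<omega> *
      (1 - fill_ratio (law_density (rest_mass i) i (X i \<omega>)) (rest_density i (X i \<omega>))))"
    "rest_density (Suc i) = (\<lambda>z. rest_density i z - min (law_density (rest_mass i) i z) (rest_density i z))"
    by auto
  then show ?case
    by simp
qed

lemma borel_measurable_rest_mass [measurable]: "rest_mass i \<in> borel_measurable M"
  and borel_measurable_rest_density [measurable]: "rest_density i \<in> borel_measurable unit_ival"
  using borel_measurable_rest_mass_rest_density by auto

lemma borel_measurable_offered_density [measurable]: "offered_density i \<in> borel_measurable unit_ival"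
  unfolding offered_density_def by measurable

lemma borel_measurable_accepted_density [measurable]: "accepted_density i \<in> borel_measurable unit_ival"
  unfolding accepted_density_def[abs_def] by measurable

lemma borel_measurable_weight [measurable]: "weight i \<in> borel_measurable M"
proof -
  have "(\<lambda>z. fill_ratio (offered_density i z) (rest_density i z)) \<in> borel_measurable unit_ival"
    unfolding fill_ratio_def by measurable
  from measurable_comp_X[OF this, of i] show ?thesis
    unfolding weight_def[abs_def] by measurable
qed

lemma sum_weight: "(\<Sum>i<n. weight i \<omega>) = 1 - rest_mass n \<omega>"
  by (induction n) (simp_all add: rest_mass_Suc_eq del: rest_mass.simps(2))

lemma sum_accepted_density: "(\<Sum>i<n. accepted_density i z) = target_density z - rest_density n z"
  by (induction n) (simp_all add: rest_density_Suc_eq del: rest_density.simps(2))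

lemma nn_integral_weight_comp:
  assumes [measurable]: "h \<in> borel_measurable unit_ival"
  shows "(\<integral>\<^sup>+\<omega>. ennreal (weight i \<omega>) * h (X i \<omega>) \<partial>M)
       = (\<integral>\<^sup>+z. ennreal (accepted_density i z) * h z \<partial>mixture)"
proof -
  let ?f = "\<lambda>z. fill_ratio (offered_density i z) (rest_density i z)"
  have [measurable]: "?f \<in> borel_measurable unit_ival"
    unfolding fill_ratio_def by measurable
  have "(\<integral>\<^sup>+\<omega>. ennreal (weight i \<omega>) * h (X i \<omega>) \<partial>M)
      = (\<integral>\<^sup>+\<omega>. ennreal (rest_mass i \<omega>) * (ennreal (?f (X i \<omega>)) * h (X i \<omega>)) \<partial>M)"
    by (simp add: weight_def ennreal_mult rest_mass_nonneg fill_ratio_nonneg rest_density_nonneg mult.assoc)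
  also have "\<dots> = (\<integral>\<^sup>+z. ennreal (offered_density i z) * (ennreal (?f z) * h z) \<partial>mixture)"
    by (rule nn_integral_weighted_comp[where L = "rest_mass i" and i = i, folded offered_density_def])
       (simp_all add: rest_mass_le_1)
  also have "\<dots> = (\<integral>\<^sup>+z. ennreal (accepted_density i z) * h z \<partial>mixture)"
    by (simp add: accepted_density_def mult_fill_ratio rest_density_nonneg offered_density_nonneg
        ennreal_mult[symmetric] fill_ratio_nonneg mult.assoc[symmetric])
  finally show ?thesis .
qed

definition total_weight :: "'a \<Rightarrow> ennreal" where
  "total_weight \<omega> = (\<Sum>i. ennreal (weight i \<omega>))"

definition total_accepted :: "real \<Rightarrow> ennreal" where
  "total_accepted z = (\<Sum>i. ennreal (accepted_density i z))"

lemma borel_measurable_total_weight [measurable]: "total_weight \<in> borel_measurable M"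
  unfolding total_weight_def by measurable

lemma borel_measurable_total_accepted [measurable]: "total_accepted \<in> borel_measurable unit_ival"
  unfolding total_accepted_def by measurable

lemma total_weight_le_1: "total_weight \<omega> \<le> 1"
  unfolding total_weight_def
  using suminf_ennreal_le_if_remainders[OF weight_nonneg rest_mass_nonneg sum_weight] by simp

lemma total_weight_eq_1_if_rest_mass_0: "rest_mass n \<omega> = 0 \<Longrightarrow> total_weight \<omega> = 1"
  unfolding total_weight_def
  using suminf_ennreal_eq_if_remainder_0[OF weight_nonneg rest_mass_nonneg sum_weight] by simp

lemma total_accepted_le_target_density: "total_accepted z \<le> ennreal (target_density z)"
  unfolding total_accepted_def
  by (rule suminf_ennreal_le_if_remainders[OF accepted_density_nonneg rest_density_nonneg sum_accepted_density])

lemma total_accepted_eq_if_rest_density_0: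
  "rest_density n z = 0 \<Longrightarrow> total_accepted z = ennreal (target_density z)"
  unfolding total_accepted_def
  by (rule suminf_ennreal_eq_if_remainder_0[OF accepted_density_nonneg rest_density_nonneg sum_accepted_density])

lemma nn_integral_total_weight_comp:
  assumes "C \<in> sets unit_ival"
  shows "(\<integral>\<^sup>+\<omega>. (\<Sum>i. ennreal (weight i \<omega>) * indicator C (X i \<omega>)) \<partial>M)
       = (\<integral>\<^sup>+z. total_accepted z * indicator C z \<partial>mixture)"
proof -
  have [measurable]: "C \<in> sets unit_ival"
    by fact
  have [measurable]: "(\<lambda>\<omega>. indicator C (X i \<omega>) :: ennreal) \<in> borel_measurable M" for i
    by (rule measurable_comp_X) simp
  have "(\<integral>\<^sup>+\<omega>. (\<Sum>i. ennreal (weight i \<omega>) * indicator C (X i \<omega>)) \<partial>M)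
      = (\<Sum>i. \<integral>\<^sup>+\<omega>. ennreal (weight i \<omega>) * indicator C (X i \<omega>) \<partial>M)"
    by (intro nn_integral_suminf) measurable
  also have "\<dots> = (\<Sum>i. \<integral>\<^sup>+z. ennreal (accepted_density i z) * indicator C z \<partial>mixture)"
    by (simp add: nn_integral_weight_comp)
  also have "\<dots> = (\<integral>\<^sup>+z. total_accepted z * indicator C z \<partial>mixture)"
    unfolding total_accepted_def ennreal_suminf_multc[symmetric]
    by (intro nn_integral_suminf[symmetric]) measurable
  finally show ?thesis .
qed

lemma nn_integral_total_weight: "(\<integral>\<^sup>+\<omega>. total_weight \<omega> \<partial>M) = (\<integral>\<^sup>+z. total_accepted z \<partial>mixture)"
  using nn_integral_total_weight_comp[of "{0<..<1}"]
  by (simp add: sets_unit_ival_iff total_weight_def indicator_simps(1)[OF X_in_unit_ival]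
      cong: nn_integral_cong_simp)

definition deficit :: "real set" where
  "deficit = {z \<in> {0<..<1}. total_accepted z < ennreal (target_density z)}"

lemma sets_deficit [measurable]: "deficit \<in> sets unit_ival"
proof -
  have "{z \<in> space unit_ival. total_accepted z < ennreal (target_density z)} \<in> sets unit_ival"
    by measurable
  then show ?thesis
    by (simp add: deficit_def)
qed

lemma total_weight_eq_1_if_hits_deficit:
  assumes "X i \<omega> \<in> deficit"
  shows "total_weight \<omega> = 1"
proof (cases "offered_density i (X i \<omega>) \<le> rest_density i (X i \<omega>)")
  case True
  then have "rest_mass (Suc i) \<omega> = 0"
    by (simp add: fill_ratio_def offered_density_def)
  then show ?thesis
    by (rule total_weight_eq_1_if_rest_mass_0)
next
  case False
  then have "rest_density (Suc i) (X i \<omega>) = 0"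
    by (simp add: offered_density_def)
  then have "total_accepted (X i \<omega>) = ennreal (target_density (X i \<omega>))"
    by (rule total_accepted_eq_if_rest_density_0)
  with assms show ?thesis
    by (simp add: deficit_def)
qed

lemma AE_total_accepted_eq_target_density:
  "AE z in mixture. total_accepted z = ennreal (target_density z)"
proof -
  have "AE z in mixture. z \<notin> deficit"
  proof (cases "emeasure \<nu> deficit = 0")
    case True
    then have "(\<integral>\<^sup>+z. ennreal (target_density z) * indicator deficit z \<partial>mixture) = 0"
      by (simp add: emeasure_target)
    then have "AE z in mixture. ennreal (target_density z) * indicator deficit z = 0"
      by (subst (asm) nn_integral_0_iff_AE) auto
    then show ?thesis
      by eventually_elim (auto simp: deficit_def indicator_def)
  next
    case False
    then have "AE \<omega> in M. \<exists>i. X i \<omega> \<in> deficit"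
      by (intro hits) (simp_all add: sets_target)
    then have "AE \<omega> in M. total_weight \<omega> = 1"
      by eventually_elim (auto intro: total_weight_eq_1_if_hits_deficit)
    then have "(\<integral>\<^sup>+z. total_accepted z \<partial>mixture) = (\<integral>\<^sup>+z. ennreal (target_density z) \<partial>mixture)"
      by (simp add: nn_integral_total_weight[symmetric] nn_integral_target_density emeasure_space_1
          cong: nn_integral_cong_AE)
    then have "AE z in mixture. total_accepted z = ennreal (target_density z)"
      using nn_integral_target_density total_accepted_le_target_density
      by (intro AE_eq_if_nn_integral_eq) auto
    then show ?thesis
      by eventually_elim (auto simp: deficit_def)
  qed
  with AE_space show ?thesis
    by eventually_elim (auto simp: deficit_def order.strict_iff_order total_accepted_le_target_density)
qed

lemma AE_total_weight_eq_1: "AE \<omega> in M. total_weight \<omega> = 1"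
proof -
  have "(\<integral>\<^sup>+\<omega>. total_weight \<omega> \<partial>M) = (\<integral>\<^sup>+\<omega>. 1 \<partial>M)"
    using AE_total_accepted_eq_target_density
    by (simp add: nn_integral_total_weight nn_integral_target_density emeasure_space_1
        cong: nn_integral_cong_AE)
  then show ?thesis
    using total_weight_le_1 by (intro AE_eq_if_nn_integral_eq) (auto simp: emeasure_space_1)
qed

lemma nn_integral_total_weight_target:
  assumes "C \<in> sets unit_ival"
  shows "(\<integral>\<^sup>+\<omega>. (\<Sum>i. ennreal (weight i \<omega>) * indicator C (X i \<omega>)) \<partial>M) = emeasure \<nu> C"
proof -
  have "(\<integral>\<^sup>+z. total_accepted z * indicator C z \<partial>mixture)
      = (\<integral>\<^sup>+z. ennreal (target_density z) * indicator C z \<partial>mixture)"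
    using AE_total_accepted_eq_target_density by (intro nn_integral_cong_AE) auto
  with assms show ?thesis
    by (simp add: nn_integral_total_weight_comp emeasure_target)
qed

section \<open>The selector\<close>

definition selection :: "(nat \<times> 'a) measure" where
  "selection = density (count_space UNIV \<Otimes>\<^sub>M M) (\<lambda>(i, \<omega>). ennreal (weight i \<omega>))"

lemma measurable_selection [simp]: "measurable selection N = measurable (count_space UNIV \<Otimes>\<^sub>M M) N"
  unfolding selection_def by (rule measurable_cong_sets) simp_all

lemma emeasure_distr_selection:
  assumes "f \<in> measurable (count_space UNIV \<Otimes>\<^sub>M M) N" "E \<in> sets N"
  shows "emeasure (distr selection N f) E = (\<integral>\<^sup>+\<omega>. (\<Sum>i. ennreal (weight i \<omega>) * indicator E (f (i, \<omega>))) \<partial>M)"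
  unfolding selection_def
  by (rule emeasure_distr_density_count_space_pair) (use assms sigma_finite_measure_axioms in auto)

lemma distr_selection_comp_snd:
  assumes g: "g \<in> measurable M N"
  shows "distr selection N (\<lambda>(i, \<omega>). g \<omega>) = distr M N g"
proof (rule measure_eqI)
  fix A assume "A \<in> sets (distr selection N (\<lambda>(i, \<omega>). g \<omega>))"
  then have A: "A \<in> sets N"
    by simp
  have "(\<lambda>(i, \<omega>). g \<omega>) \<in> measurable (count_space UNIV \<Otimes>\<^sub>M M) N"
    using g by (simp add: split_beta')
  from emeasure_distr_selection[OF this A]
  have "emeasure (distr selection N (\<lambda>(i, \<omega>). g \<omega>)) A
      = (\<integral>\<^sup>+\<omega>. total_weight \<omega> * indicator A (g \<omega>) \<partial>M)"
    by (simp add: total_weight_def)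
  also have "\<dots> = (\<integral>\<^sup>+\<omega>. indicator (g -` A \<inter> space M) \<omega> \<partial>M)"
    using AE_total_weight_eq_1 by (intro nn_integral_cong_AE) (auto simp: indicator_def)
  also have "\<dots> = emeasure (distr M N g) A"
    using g A by (simp add: emeasure_distr measurable_sets)
  finally show "emeasure (distr selection N (\<lambda>(i, \<omega>). g \<omega>)) A = emeasure (distr M N g) A" .
qed simp

lemma distr_selection_X: "distr selection unit_ival (\<lambda>(i, \<omega>). X i \<omega>) = \<nu>"
proof (rule measure_eqI)
  fix C assume "C \<in> sets (distr selection unit_ival (\<lambda>(i, \<omega>). X i \<omega>))"
  then have "C \<in> sets unit_ival"
    by simp
  then show "emeasure (distr selection unit_ival (\<lambda>(i, \<omega>). X i \<omega>)) C = emeasure \<nu> C"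
    by (simp add: emeasure_distr_selection measurable_X_pair nn_integral_total_weight_target)
qed (simp add: sets_target)

definition selector :: "((nat \<Rightarrow> real) \<times> real) measure" where
  "selector = distr selection (seq_space \<Otimes>\<^sub>M unit_ival) (\<lambda>(i, \<omega>). ((\<lambda>j. X j \<omega>), X i \<omega>))"

lemma measurable_X_seq: "(\<lambda>\<omega> j. X j \<omega>) \<in> measurable M seq_space"
  unfolding seq_space_def
  by (rule measurable_PiM_single') (auto simp: measurable_X dest: measurable_space[OF measurable_X])

lemma measurable_selector_map:
  "(\<lambda>(i, \<omega>). ((\<lambda>j. X j \<omega>), X i \<omega>)) \<in> measurable (count_space UNIV \<Otimes>\<^sub>M M) (seq_space \<Otimes>\<^sub>M unit_ival)"
  unfolding split_beta'
  by (rule measurable_pair_measure_countable1) (auto intro!: measurable_Pair simp: measurable_X_seq measurable_X)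

lemma sets_selector: "sets selector = sets (seq_space \<Otimes>\<^sub>M unit_ival)"
  by (simp add: selector_def)

lemma distr_selector_fst: "distr selector seq_space fst = distr M seq_space (\<lambda>\<omega> i. X i \<omega>)"
  unfolding selector_def using measurable_selector_map
  by (subst distr_distr) (auto simp: comp_def split_beta' distr_selection_comp_snd[OF measurable_X_seq, unfolded split_beta'])

lemma distr_selector_snd: "distr selector unit_ival snd = \<nu>"
  unfolding selector_def using measurable_selector_map
  by (subst distr_distr) (auto simp: comp_def split_beta' distr_selection_X[unfolded split_beta'])

lemma prob_space_selector: "prob_space selector"
proof (rule prob_space_distrD)
  show "fst \<in> measurable selector seq_space"
    by (simp add: measurable_cong_sets[OF sets_selector refl])
  show "prob_space (distr selector seq_space fst)"
    unfolding distr_selector_fst using measurable_X_seq by (rule prob_space_distr)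
qed

lemma AE_selector: "AE p in selector. snd p \<in> range (fst p)"
  unfolding selector_def using measurable_selector_map sets_selector_event
  by (subst AE_distr_iff) auto

theorem selector_exists:
  "\<exists>P :: ((nat \<Rightarrow> real) \<times> real) measure.
     prob_space P \<and>
     sets P = sets (seq_space \<Otimes>\<^sub>M unit_ival) \<and>
     distr P seq_space fst = distr M seq_space (\<lambda>\<omega> i. X i \<omega>) \<and>
     distr P unit_ival snd = \<nu> \<and>
     (AE p in P. snd p \<in> range (fst p))"
  using prob_space_selector sets_selector distr_selector_fst distr_selector_snd AE_selector by blast

end

theorem lemma3p7:
  fixes M :: "'a measure" and X :: "nat \<Rightarrow> 'a \<Rightarrow> real"
  assumes "prob_space M"
    and "\<And>i. X i \<in> measurable M unit_ival"
    and "\<And>B. B \<in> sets borel \<Longrightarrow> B \<subseteq> {0<..<1} \<Longrightarrow> emeasure lborel B > 0 \<Longrightarrow>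
           (AE \<omega> in M. \<exists>i. X i \<omega> \<in> B)"
  shows "\<exists>P :: ((nat \<Rightarrow> real) \<times> real) measure.
           prob_space P \<and>
           sets P = sets (seq_space \<Otimes>\<^sub>M unit_ival) \<and>
           distr P seq_space fst = distr M seq_space (\<lambda>\<omega> i. X i \<omega>) \<and>
           distr P unit_ival snd = unit_ival \<and>
           (AE p in P. snd p \<in> range (fst p))"
proof -
  have "hitting_sequence M unit_ival X"
    unfolding hitting_sequence_def hitting_sequence_axioms_def
    using assms prob_space_unit_ival
    by (auto simp: sets_unit_ival_iff emeasure_unit_ival zero_less_iff_neq_zero)
  then show ?thesis
    by (rule hitting_sequence.selector_exists)
qed

end
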